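(* Let $0<r<s<\infty$, $\alpha>0$, $\beta>0$. For $n\ge3$ let $h_*=h_*(n)>0$ solve $\frac{2\alpha}{h_*^r}+\frac{2\beta}{h_*^s}=\log n-(\log\log n)^2$ and let $h_+=h_+(n)>0$ solve $\frac{2\alpha}{h_+^r}+\frac{2\beta}{h_+^s}=\log n+(\log\log n)^2$. Then $h_+(n)=(\log n/(2\beta))^{-1/s}(1+o(1))$, and for all $a\in\mathbb{R}$, $b\in\mathbb{R}$, as $n\to\infty$, $$h_+^a\exp\Big(-\frac{2\alpha}{h_+^r}\Big)=h_*^a\exp\Big(-\frac{2\alpha}{h_*^r}\Big)(1+o(1)),\qquad(\log n)^b\,n\exp\Big(-\frac{2\alpha}{h_+^r}-\frac{2\beta}{h_+^s}\Big)=o(1).$$ *)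

theory Defs
  imports Complex_Main "HOL-Library.Landau_Symbols"
begin

end

theory Submission
  imports Defs "HOL-Real_Asymp.Real_Asymp"
begin

(* Substituting u = h powr -s turns c / h powr r + d / h powr s = T into d u + c u powr (r/s) = T,
   a linear equation perturbed by a sublinear term since r < s; hence u ~ T / d, which gives the
   asymptotics of h. Solutions at the levels log n +- (log log n)^2 differ in u by at most
   2 (log log n)^2 / d, so by concavity of u powr (r/s) their terms 2 alpha / h powr r differ by
   O((log n) powr (r/s - 1) * (log log n)^2) = o(1). Finally n * exp (-(log n + (log log n)^2))
   = exp (-(log log n)^2) decays faster than any power of log n. *)

lemma powr_diff_le_tangent:
  fixes x y q :: real
  assumes "0 < y" "y \<le> x" "0 \<le> q" "q \<le> 1"
  shows "x powr q - y powr q \<le> y powr (q - 1) * (x - y)"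
proof -
  have "(x / y) powr q \<le> x / y"
    using powr_mono[of q 1 "x / y"] assms by simp
  then have "x powr q \<le> y powr q * (x / y)"
    using assms by (simp add: powr_divide divide_le_eq mult.commute)
  also have "\<dots> = y powr (q - 1) * x"
    using assms by (simp add: powr_diff)
  finally show ?thesis
    using assms by (simp add: powr_diff right_diff_distrib)
qed

lemma divide_powr_eq_powr_substitution:
  fixes c h r s :: real
  assumes "0 < h" "s \<noteq> 0"
  shows "c / h powr r = c * (h powr - s) powr (r / s)"
proof -
  have "(h powr - s) powr (r / s) = h powr - r"
    using assms by (simp add: powr_powr)
  then show ?thesis
    using assms by (simp add: powr_minus_divide)
qed

lemma sublinear_perturbation_asymp_equiv:
  fixes u T :: "'a \<Rightarrow> real" and c d q :: real
  assumes "0 \<le> q" "q < 1" "0 \<le> c" "0 < d" and T: "filterlim T at_top F"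
    and eq: "eventually (\<lambda>x. 0 < u x \<and> d * u x + c * u x powr q = T x) F"
  shows "u \<sim>[F] (\<lambda>x. T x / d)"
proof (rule asymp_equivI')
  have "((\<lambda>x. c * d powr - q * T x powr (q - 1)) \<longlongrightarrow> c * d powr - q * 0) F"
    using assms by (intro tendsto_intros tendsto_neg_powr T) auto
  then have lower: "((\<lambda>x. 1 - c * d powr - q * T x powr (q - 1)) \<longlongrightarrow> 1) F"
    using tendsto_diff[OF tendsto_const, of _ 0 F 1] by simp
  have bounds: "eventually (\<lambda>x. u x / (T x / d) \<in> {1 - c * d powr - q * T x powr (q - 1)..1}) F"
    using eq
  proof eventually_elim
    case (elim x)
    then have u: "0 < u x" and Tx: "T x = d * u x + c * u x powr q" by auto
    have "d * u x \<le> T x" "0 < T x"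
      using u assms by (auto simp: Tx add_pos_nonneg)
    have scale: "(T x / d) powr q = d powr - q * T x powr (q - 1) * T x"
      using \<open>0 < T x\<close> assms by (simp add: powr_divide powr_diff powr_minus_divide)
    have "c * u x powr q \<le> c * (T x / d) powr q"
      using u \<open>d * u x \<le> T x\<close> assms by (intro mult_left_mono powr_mono2) (auto simp: field_simps)
    also have "\<dots> = c * d powr - q * T x powr (q - 1) * T x"
      by (simp add: scale)
    finally show ?case
      using u \<open>0 < T x\<close> assms by (auto simp: Tx field_simps)
  qed
  show "((\<lambda>x. u x / (T x / d)) \<longlongrightarrow> 1) F"
    by (rule real_tendsto_sandwich[OF _ _ lower tendsto_const]) (use bounds in \<open>auto elim: eventually_mono\<close>)
qed

lemma sublinear_perturbation_gap_le:
  fixes u v c d q :: real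
  assumes "0 \<le> q" "q \<le> 1" "0 \<le> c" "0 < d" "0 < u" "0 < v"
    and le: "d * v + c * v powr q \<le> d * u + c * u powr q"
  shows "0 \<le> c * u powr q - c * v powr q"
    and "c * u powr q - c * v powr q
           \<le> c / d * v powr (q - 1) * ((d * u + c * u powr q) - (d * v + c * v powr q))"
proof -
  have "v \<le> u"
  proof (rule ccontr)
    assume "\<not> v \<le> u"
    then have "c * u powr q \<le> c * v powr q" and "d * u < d * v"
      using assms by (simp_all add: mult_left_mono powr_mono2)
    with le show False
      by linarith
  qed
  then show nonneg: "0 \<le> c * u powr q - c * v powr q"
    using assms by (simp add: mult_left_mono powr_mono2)
  have "d * (u - v) \<le> (d * u + c * u powr q) - (d * v + c * v powr q)"
    using nonneg by (simp add: right_diff_distrib)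
  then have u_v: "u - v \<le> ((d * u + c * u powr q) - (d * v + c * v powr q)) / d"
    using assms by (simp add: le_divide_eq mult.commute)
  have "c * u powr q - c * v powr q \<le> c * (v powr (q - 1) * (u - v))"
    using powr_diff_le_tangent[of v u q] \<open>v \<le> u\<close> assms
    by (simp add: right_diff_distrib [symmetric] mult_left_mono)
  also have "\<dots> \<le> c * (v powr (q - 1) * (((d * u + c * u powr q) - (d * v + c * v powr q)) / d))"
    using u_v assms by (intro mult_left_mono) auto
  finally show "c * u powr q - c * v powr q
      \<le> c / d * v powr (q - 1) * ((d * u + c * u powr q) - (d * v + c * v powr q))"
    by (simp add: field_simps)
qed

lemma solution_asymp_equiv:
  fixes h T L :: "'a \<Rightarrow> real" and c d r s :: real
  assumes "0 < r" "r < s" "0 \<le> c" "0 < d"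
    and eq: "eventually (\<lambda>x. 0 < h x \<and> c / h x powr r + d / h x powr s = T x) F"
    and TL: "T \<sim>[F] L" and L: "filterlim L at_top F"
  shows "h \<sim>[F] (\<lambda>x. (L x / d) powr (- 1 / s))"
proof -
  let ?u = "\<lambda>x. h x powr - s"
  have T: "filterlim T at_top F"
    using asymp_equiv_at_top_transfer[OF asymp_equiv_symI[OF TL] L] .
  have "?u \<sim>[F] (\<lambda>x. T x / d)"
  proof (rule sublinear_perturbation_asymp_equiv[OF _ _ _ _ T])
    show "eventually (\<lambda>x. 0 < ?u x \<and> d * ?u x + c * ?u x powr (r / s) = T x) F"
      by (rule eventually_mono[OF eq])
         (use assms in \<open>auto simp: divide_powr_eq_powr_substitution[of _ s c r] powr_minus_divide\<close>)
  qed (use assms in auto)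
  then have u_equiv: "?u \<sim>[F] (\<lambda>x. L x / d)"
    using asymp_equiv_divide[OF TL asymp_equiv_refl[of "\<lambda>_. d"]] by (rule asymp_equiv_trans)
  have L_pos: "eventually (\<lambda>x. 0 < L x) F"
    using L by (simp add: filterlim_at_top_dense)
  have "(\<lambda>x. ?u x powr (- 1 / s)) \<sim>[F] (\<lambda>x. (L x / d) powr (- 1 / s))"
    by (rule asymp_equiv_powr_real[OF u_equiv]) (use L_pos assms in \<open>auto elim: eventually_mono\<close>)
  moreover have "eventually (\<lambda>x. ?u x powr (- 1 / s) = h x) F"
    by (rule eventually_mono[OF eq]) (use assms in \<open>simp add: powr_powr\<close>)
  ultimately show ?thesis
    by (rule asymp_equiv_transfer) simp
qed

lemma solution_gap_tendsto_0:
  fixes h1 h2 T e :: "'a \<Rightarrow> real" and c d r s :: real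
  assumes "0 < r" "r < s" "0 \<le> c" "0 < d"
    and eq1: "eventually (\<lambda>x. 0 < h1 x \<and> c / h1 x powr r + d / h1 x powr s = T x + e x) F"
    and eq2: "eventually (\<lambda>x. 0 < h2 x \<and> c / h2 x powr r + d / h2 x powr s = T x - e x) F"
    and e: "eventually (\<lambda>x. 0 \<le> e x) F"
    and small: "((\<lambda>x. h2 x powr (s - r) * e x) \<longlongrightarrow> 0) F"
  shows "((\<lambda>x. c / h1 x powr r - c / h2 x powr r) \<longlongrightarrow> 0) F"
proof (rule real_tendsto_sandwich[OF _ _ tendsto_const])
  show "((\<lambda>x. 2 * c / d * (h2 x powr (s - r) * e x)) \<longlongrightarrow> 0) F"
    by (rule tendsto_mult_right_zero[OF small])
  have "eventually (\<lambda>x. 0 \<le> c / h1 x powr r - c / h2 x powr r \<and>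
      c / h1 x powr r - c / h2 x powr r \<le> 2 * c / d * (h2 x powr (s - r) * e x)) F"
    using eq1 eq2 e
  proof eventually_elim
    case (elim x)
    define u v where "u = h1 x powr - s" and "v = h2 x powr - s"
    have subst: "c / h1 x powr r = c * u powr (r / s)" "d / h1 x powr s = d * u"
      "c / h2 x powr r = c * v powr (r / s)" "d / h2 x powr s = d * v"
      using elim assms
      by (auto simp: u_def v_def divide_powr_eq_powr_substitution[of _ s c r] powr_minus_divide)
    have uv: "0 < u" "0 < v"
      using elim by (simp_all add: u_def v_def)
    have "- s * (r / s - 1) = s - r"
      using assms by (simp add: field_simps)
    then have exponent: "v powr (r / s - 1) = h2 x powr (s - r)"
      by (simp add: v_def powr_powr)
    have le: "d * v + c * v powr (r / s) \<le> d * u + c * u powr (r / s)"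
      and gap_eq: "(d * u + c * u powr (r / s)) - (d * v + c * v powr (r / s)) = 2 * e x"
      using elim by (simp_all add: subst add.commute)
    note gap = sublinear_perturbation_gap_le[OF _ _ _ _ uv le]
    have "c * u powr (r / s) - c * v powr (r / s) \<le> c / d * v powr (r / s - 1) * (2 * e x)"
      using gap(2) assms by (simp add: gap_eq)
    then show ?case
      using gap(1) assms by (simp add: subst exponent ac_simps)
  qed
  then show "eventually (\<lambda>x. 0 \<le> c / h1 x powr r - c / h2 x powr r) F"
    and "eventually (\<lambda>x. c / h1 x powr r - c / h2 x powr r \<le> 2 * c / d * (h2 x powr (s - r) * e x)) F"
    by (auto elim: eventually_mono)
qed

lemma asymp_equiv_exp:
  fixes f g :: "'a \<Rightarrow> real"
  assumes "((\<lambda>x. f x - g x) \<longlongrightarrow> 0) F"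
  shows "(\<lambda>x. exp (f x)) \<sim>[F] (\<lambda>x. exp (g x))"
proof (rule asymp_equivI')
  have "((\<lambda>x. exp (f x - g x)) \<longlongrightarrow> exp 0) F"
    by (intro tendsto_intros assms)
  then show "((\<lambda>x. exp (f x) / exp (g x)) \<longlongrightarrow> 1) F"
    by (simp add: exp_diff)
qed

lemma solution_weights_asymp_equiv:
  fixes h1 h2 g T e :: "'a \<Rightarrow> real" and a c d r s :: real
  assumes "0 < r" "r < s" "0 \<le> c" "0 < d"
    and eq1: "eventually (\<lambda>x. 0 < h1 x \<and> c / h1 x powr r + d / h1 x powr s = T x + e x) F"
    and eq2: "eventually (\<lambda>x. 0 < h2 x \<and> c / h2 x powr r + d / h2 x powr s = T x - e x) F"
    and e: "eventually (\<lambda>x. 0 \<le> e x) F"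
    and h1: "h1 \<sim>[F] g" and h2: "h2 \<sim>[F] g"
    and small: "((\<lambda>x. g x powr (s - r) * e x) \<longlongrightarrow> 0) F"
  shows "(\<lambda>x. h1 x powr a * exp (- c / h1 x powr r)) \<sim>[F] (\<lambda>x. h2 x powr a * exp (- c / h2 x powr r))"
proof -
  have pos: "eventually (\<lambda>x. 0 < h1 x \<and> 0 < h2 x \<and> 0 < g x) F"
    using eq1 eq2 asymp_equiv_eventually_pos_iff[OF h2] by eventually_elim auto
  have "(\<lambda>x. g x powr (s - r) * e x) \<sim>[F] (\<lambda>x. h2 x powr (s - r) * e x)"
    using pos
    by (intro asymp_equiv_mult[OF asymp_equiv_powr_real[OF asymp_equiv_symI[OF h2]] asymp_equiv_refl])
       (auto elim: eventually_mono)
  then have "((\<lambda>x. h2 x powr (s - r) * e x) \<longlongrightarrow> 0) F"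
    using small by (rule asymp_equiv_tendsto_transfer)
  then have "((\<lambda>x. c / h1 x powr r - c / h2 x powr r) \<longlongrightarrow> 0) F"
    by (rule solution_gap_tendsto_0[OF assms(1-4) eq1 eq2 e])
  from tendsto_minus[OF this]
  have "(\<lambda>x. exp (- c / h1 x powr r)) \<sim>[F] (\<lambda>x. exp (- c / h2 x powr r))"
    by (intro asymp_equiv_exp) simp
  moreover have "(\<lambda>x. h1 x powr a) \<sim>[F] (\<lambda>x. h2 x powr a)"
    using pos by (intro asymp_equiv_powr_real asymp_equiv_trans[OF h1 asymp_equiv_symI[OF h2]])
      (auto elim: eventually_mono)
  ultimately show ?thesis
    by (rule asymp_equiv_mult[rotated])
qed

lemma ln_powr_mult_exp_tendsto_0:
  fixes \<phi> :: "nat \<Rightarrow> real" and b :: real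
  assumes "eventually (\<lambda>n. \<phi> n = ln (real n) + (ln (ln (real n)))^2) at_top"
  shows "(\<lambda>n. ln (real n) powr b * real n * exp (- \<phi> n)) \<longlonglongrightarrow> 0"
proof (rule Lim_transform_eventually)
  show "(\<lambda>n. ln (real n) powr b * exp (- ((ln (ln (real n)))^2))) \<longlonglongrightarrow> 0"
    by real_asymp
  show "eventually (\<lambda>n. ln (real n) powr b * exp (- ((ln (ln (real n)))^2)) =
      ln (real n) powr b * real n * exp (- \<phi> n)) at_top"
    using assms eventually_gt_at_top[of 0]
  proof eventually_elim
    case (elim n)
    then have "real n * exp (- \<phi> n) = exp (- ((ln (ln (real n)))^2))"
      by (simp add: exp_diff exp_minus inverse_eq_divide)
    then show ?case
      by (simp only: mult.assoc)
  qed
qed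

theorem lemma9:
  fixes r s \<alpha> \<beta> a b :: real and hs hp :: "nat \<Rightarrow> real"
  assumes "0 < r" "r < s" "0 < \<alpha>" "0 < \<beta>"
    and hs: "\<And>n. n \<ge> 3 \<Longrightarrow> hs n > 0 \<and>
       2 * \<alpha> / hs n powr r + 2 * \<beta> / hs n powr s = ln (real n) - (ln (ln (real n)))^2"
    and hp: "\<And>n. n \<ge> 3 \<Longrightarrow> hp n > 0 \<and>
       2 * \<alpha> / hp n powr r + 2 * \<beta> / hp n powr s = ln (real n) + (ln (ln (real n)))^2"
  shows "hp \<sim>[at_top] (\<lambda>n. (ln (real n) / (2 * \<beta>)) powr (- 1 / s)) \<and>
         (\<lambda>n. hp n powr a * exp (- 2 * \<alpha> / hp n powr r)) \<sim>[at_top]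
         (\<lambda>n. hs n powr a * exp (- 2 * \<alpha> / hs n powr r)) \<and>
         (\<lambda>n. ln (real n) powr b * real n *
            exp (- 2 * \<alpha> / hp n powr r - 2 * \<beta> / hp n powr s)) \<longlonglongrightarrow> 0"
proof -
  let ?\<Phi> = "\<lambda>h. 2 * \<alpha> / h powr r + 2 * \<beta> / h powr s"
  let ?e = "\<lambda>n. (ln (ln (real n)))^2"
  let ?g = "\<lambda>n. (ln (real n) / (2 * \<beta>)) powr (- 1 / s)"
  have eq_p: "eventually (\<lambda>n. 0 < hp n \<and> ?\<Phi> (hp n) = ln (real n) + ?e n) at_top"
    and eq_s: "eventually (\<lambda>n. 0 < hs n \<and> ?\<Phi> (hs n) = ln (real n) - ?e n) at_top"
    using hp hs by (auto intro: eventually_mono[OF eventually_ge_at_top[of 3]])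
  have L: "filterlim (\<lambda>n. ln (real n)) at_top at_top"
    and Lp: "(\<lambda>n. ln (real n) + ?e n) \<sim>[at_top] (\<lambda>n. ln (real n))"
    and Ls: "(\<lambda>n. ln (real n) - ?e n) \<sim>[at_top] (\<lambda>n. ln (real n))"
    by real_asymp+
  have hp_equiv: "hp \<sim>[at_top] ?g"
    by (rule solution_asymp_equiv[OF _ _ _ _ eq_p Lp L]) (use assms in auto)
  have hs_equiv: "hs \<sim>[at_top] ?g"
    by (rule solution_asymp_equiv[OF _ _ _ _ eq_s Ls L]) (use assms in auto)
  have "((\<lambda>n. ?g n powr (s - r) * ?e n) \<longlongrightarrow> 0) at_top"
    using assms by real_asymp
  then have "(\<lambda>n. hp n powr a * exp (- (2 * \<alpha>) / hp n powr r)) \<sim>[at_top]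
      (\<lambda>n. hs n powr a * exp (- (2 * \<alpha>) / hs n powr r))"
    using assms by (intro solution_weights_asymp_equiv[OF _ _ _ _ eq_p eq_s _ hp_equiv hs_equiv]) auto
  moreover have "(\<lambda>n. ln (real n) powr b * real n * exp (- ?\<Phi> (hp n))) \<longlonglongrightarrow> 0"
    by (rule ln_powr_mult_exp_tendsto_0) (use eq_p in \<open>auto elim: eventually_mono\<close>)
  ultimately show ?thesis
    using hp_equiv by (simp add: algebra_simps)
qed

end
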